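(* Let $n$ be a positive integer, $\lambda$ an infinite cardinal, and $\tau$ a shift-continuous feebly compact $T_1$-topology on the semilattice $\exp_n\lambda$. Then for every open neighbourhood $U(0)$ of the zero $0=\varnothing$ in $(\exp_n\lambda,\tau)$ there exist finitely many $x_1,\ldots,x_m\in\lambda$ such that $$\exp_n\lambda\setminus\operatorname{cl}_{\exp_n\lambda}(U(0))\subseteq{\uparrow}\{x_1\}\cup\cdots\cup{\uparrow}\{x_m\}.$$
   Context: For a positive integer $n$ and a cardinal $\lambda$, $\exp_n\lambda=\{A\subseteq\lambda\colon |A|\leqslant n\}$, regarded as a semilattice under $\cap$; its natural order is inclusion and its zero is $\varnothing$. For $e$ in a semilattice, ${\uparrow}e=\{f\colon e\leqslant f\}$; so ${\uparrow}\{x\}=\{A\in\exp_n\lambda\colon x\in A\}$. A topology on a semilattice is shift-continuous if the semilattice operation is separately continuous. A topological space is feebly compact if every locally finite open cover of it is finite. *)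

theory Defs
  imports "HOL-Analysis.Analysis"
begin

text \<open>exp_n(lambda): subsets of the ground type of size at most n. The cardinal lambda
 is represented by the (infinite) ground type 'a.\<close>
definition exp_set :: "nat \<Rightarrow> 'a set set" where
  "exp_set n = {A. finite A \<and> card A \<le> n}"

definition upset :: "nat \<Rightarrow> 'a set \<Rightarrow> 'a set set" where
  "upset n e = {f \<in> exp_set n. e \<subseteq> f}"

text \<open>Shift-continuity: the semilattice operation (intersection) is separately continuous
 (it is commutative, so continuity of translations in one argument suffices).\<close>
definition shift_continuous :: "nat \<Rightarrow> 'a set topology \<Rightarrow> bool" where
  "shift_continuous n X \<longleftrightarrow>
     (\<forall>B \<in> exp_set n. continuous_map X X (\<lambda>A. A \<inter> B))"

definition feebly_compact :: "'b topology \<Rightarrow> bool" where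
  "feebly_compact X \<longleftrightarrow>
     (\<forall>\<U>. (\<forall>U \<in> \<U>. openin X U) \<and> \<Union>\<U> = topspace X \<and> locally_finite_in X \<U>
          \<longrightarrow> finite \<U>)"

end

theory Submission
  imports Defs
begin

text \<open>Suppose the conclusion fails. Then for every finite \<open>F\<close> some \<open>A\<close> outside
  \<open>cl U\<close> misses \<open>F\<close>; choosing such an \<open>A\<close> of maximal size and adding it to \<open>F\<close>,
  repeatedly, yields pairwise disjoint nonempty \<open>A\<^sub>0, A\<^sub>1, \<dots>\<close> outside \<open>cl U\<close>.
  Shift-continuity and \<open>T\<^sub>1\<close> make every \<open>\<up>B\<close> open and every \<open>\<up>{x}\<close> closed, so
  by maximality each \<open>A\<^sub>k\<close> is an isolated point: it is the only element of the open
  set \<open>\<up>A\<^sub>k\<close> outside \<open>cl U\<close> that misses \<open>A\<^sub>0 \<union> \<dots> \<union> A\<^sub>k\<^sub>-\<^sub>1\<close>. The \<open>A\<^sub>k\<close> form a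
  locally finite family, since \<open>\<up>C\<close> contains at most one of them for \<open>C \<noteq> \<emptyset>\<close> and
  \<open>U\<close> contains none. An infinite locally finite set of isolated points contradicts
  feeble compactness.\<close>

lemma feebly_compact_isolated_points_finite:
  assumes feebly: "feebly_compact X" and t1: "t1_space X" and S: "S \<subseteq> topspace X"
    and isolated: "\<And>x. x \<in> S \<Longrightarrow> openin X {x}"
    and locfin: "\<And>y. y \<in> topspace X \<Longrightarrow> \<exists>V. openin X V \<and> y \<in> V \<and> finite (V \<inter> S)"
  shows "finite S"
proof -
  have "openin X (topspace X - S)"
  proof (subst openin_subopen, intro ballI)
    fix y assume y: "y \<in> topspace X - S"
    then obtain V where V: "openin X V" "y \<in> V" "finite (V \<inter> S)" using locfin by blast
    have "closedin X (V \<inter> S)"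
      using t1 V(3) S unfolding t1_space_closedin_finite by blast
    hence "openin X (V - V \<inter> S)" using V(1) by (simp add: openin_diff)
    moreover have "V - V \<inter> S \<subseteq> topspace X - S" using openin_subset[OF V(1)] by auto
    ultimately show "\<exists>T. openin X T \<and> y \<in> T \<and> T \<subseteq> topspace X - S" using V(2) y by blast
  qed
  define \<U> where "\<U> = insert (topspace X - S) ((\<lambda>x. {x}) ` S)"
  have "finite \<U>"
  proof (rule feebly[unfolded feebly_compact_def, rule_format], intro conjI)
    show "\<forall>W\<in>\<U>. openin X W" using \<open>openin X (topspace X - S)\<close> isolated by (auto simp: \<U>_def)
    show "\<Union>\<U> = topspace X" using S by (auto simp: \<U>_def)
    show "locally_finite_in X \<U>" unfolding locally_finite_in_def
    proof (intro conjI ballI)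
      show "\<Union>\<U> \<subseteq> topspace X" using S by (auto simp: \<U>_def)
    next
      fix y assume "y \<in> topspace X"
      then obtain V where V: "openin X V" "y \<in> V" "finite (V \<inter> S)" using locfin by blast
      have "{W \<in> \<U>. W \<inter> V \<noteq> {}} \<subseteq> insert (topspace X - S) ((\<lambda>x. {x}) ` (V \<inter> S))"
        by (auto simp: \<U>_def)
      moreover have "finite (insert (topspace X - S) ((\<lambda>x. {x}) ` (V \<inter> S)))" using V(3) by simp
      ultimately have "finite {W \<in> \<U>. W \<inter> V \<noteq> {}}" by (rule finite_subset)
      thus "\<exists>V. openin X V \<and> y \<in> V \<and> finite {W \<in> \<U>. W \<inter> V \<noteq> {}}" using V by blast
    qed
  qed
  hence "finite ((\<lambda>x. {x}) ` S)" by (simp add: \<U>_def)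
  thus "finite S" by (rule finite_imageD) simp
qed

lemma exp_set_Int: "A \<in> exp_set n \<Longrightarrow> A \<inter> B \<in> exp_set n"
  by (auto simp: exp_set_def intro: card_mono order_trans)

lemma openin_upset:
  assumes ts: "topspace X = exp_set n" and sc: "shift_continuous n X" and t1: "t1_space X"
    and B: "B \<in> exp_set n"
  shows "openin X (upset n B)"
proof -
  let ?proper = "{D. D \<subset> B}"
  have "finite B" using B by (simp add: exp_set_def)
  hence "finite ?proper" using finite_subset[of ?proper "Pow B"] by auto
  moreover have "?proper \<subseteq> topspace X"
  proof
    fix D assume "D \<in> ?proper"
    thus "D \<in> topspace X" using ts exp_set_Int[OF B, of D] by (simp add: Int_absorb1)
  qed
  ultimately have "closedin X ?proper" using t1 by (simp add: t1_space_closedin_finite)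
  hence "openin X {A \<in> topspace X. A \<inter> B \<in> topspace X - ?proper}"
    using sc B by (intro openin_continuous_map_preimage) (auto simp: shift_continuous_def)
  moreover have "{A \<in> topspace X. A \<inter> B \<in> topspace X - ?proper} = upset n B"
    using ts exp_set_Int by (auto simp: upset_def)
  ultimately show ?thesis by simp
qed

lemma closedin_upset_singleton:
  assumes ts: "topspace X = exp_set n" and sc: "shift_continuous n X" and t1: "t1_space X"
    and n: "n \<ge> 1"
  shows "closedin X (upset n {x})"
proof -
  have x: "{x} \<in> exp_set n" using n by (simp add: exp_set_def)
  have "closedin X {A \<in> topspace X. A \<inter> {x} \<in> {{x}}}"
    using sc x ts t1 by (intro closedin_continuous_map_preimage)
      (auto simp: shift_continuous_def t1_space_closedin_singleton)
  moreover have "{A \<in> topspace X. A \<inter> {x} \<in> {{x}}} = upset n {x}"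
    using ts by (auto simp: upset_def)
  ultimately show ?thesis by simp
qed

lemma openin_disjoint_from_finite:
  assumes ts: "topspace X = exp_set n" and sc: "shift_continuous n X" and t1: "t1_space X"
    and n: "n \<ge> 1" and F: "finite F"
  shows "openin X {A \<in> exp_set n. A \<inter> F = {}}"
proof -
  have "closedin X (\<Union>x \<in> F. upset n {x})"
    using F closedin_upset_singleton[OF ts sc t1 n] by (intro closedin_Union) auto
  hence "openin X (topspace X - (\<Union>x \<in> F. upset n {x}))" by (simp add: openin_diff)
  moreover have "topspace X - (\<Union>x \<in> F. upset n {x}) = {A \<in> exp_set n. A \<inter> F = {}}"
    using ts by (auto simp: upset_def)
  ultimately show ?thesis by simp
qed

lemma exp_set_exists_maximal:
  assumes "W \<subseteq> exp_set n" and "W \<noteq> {}"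
  obtains A where "A \<in> W" and "\<And>B. B \<in> W \<Longrightarrow> A \<subseteq> B \<Longrightarrow> B = A"
proof -
  obtain A0 where "A0 \<in> W" using assms(2) by blast
  moreover have "\<forall>B. B \<in> W \<longrightarrow> card B < Suc n" using assms(1) by (auto simp: exp_set_def)
  ultimately obtain A where A: "A \<in> W" and max: "\<And>B. B \<in> W \<Longrightarrow> card B \<le> card A"
    using ex_has_greatest_nat[of "\<lambda>A. A \<in> W" A0 card "Suc n"] by blast
  have "B = A" if "B \<in> W" "A \<subseteq> B" for B
  proof -
    have fin: "finite B" using that(1) assms(1) by (auto simp: exp_set_def)
    moreover have "card A = card B" using card_mono[OF fin that(2)] max[OF that(1)] by simp
    ultimately show ?thesis using that(2) by (metis card_subset_eq)
  qed
  with A that show ?thesis by blast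
qed

lemma exp_set_disjoint_maximal_sequence:
  assumes W: "W \<subseteq> exp_set n"
    and uncovered: "\<not> (\<exists>F. finite F \<and> W \<subseteq> (\<Union>x \<in> F. upset n {x}))"
  obtains A :: "nat \<Rightarrow> 'a set"
  where "\<And>k. A k \<in> W" and "\<And>j k. j \<noteq> k \<Longrightarrow> A j \<inter> A k = {}"
    and "\<And>k B. B \<in> W \<Longrightarrow> B \<inter> (\<Union>j<k. A j) = {} \<Longrightarrow> A k \<subseteq> B \<Longrightarrow> B = A k"
proof -
  define P where "P F A \<longleftrightarrow> A \<in> W \<and> A \<inter> F = {} \<and>
      (\<forall>B\<in>W. B \<inter> F = {} \<longrightarrow> A \<subseteq> B \<longrightarrow> B = A)" for F A
  have P_exists: "\<exists>A. P F A" if "finite F" for F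
  proof -
    have "\<not> W \<subseteq> (\<Union>x \<in> F. upset n {x})" using uncovered that by blast
    then obtain A where "A \<in> W" "A \<notin> (\<Union>x \<in> F. upset n {x})" by blast
    hence "A \<inter> F = {}" using W by (auto simp: upset_def)
    with \<open>A \<in> W\<close> have "{A \<in> W. A \<inter> F = {}} \<noteq> {}" by blast
    then obtain A where "A \<in> {A \<in> W. A \<inter> F = {}}"
      and "\<And>B. B \<in> {A \<in> W. A \<inter> F = {}} \<Longrightarrow> A \<subseteq> B \<Longrightarrow> B = A"
      by (rule exp_set_exists_maximal[of "{A \<in> W. A \<inter> F = {}}" n, rotated]) (use W in auto)
    thus ?thesis by (auto simp: P_def)
  qed
  define s where "s = rec_nat {} (\<lambda>_ F. F \<union> (SOME A. P F A))"
  define A where "A k = (SOME A. P (s k) A)" for k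
  have s_0: "s 0 = {}" and s_Suc: "s (Suc k) = s k \<union> A k" for k
    by (simp_all add: s_def A_def)
  have s_eq: "s k = (\<Union>j<k. A j)" for k
    by (induction k) (simp_all add: s_0 s_Suc lessThan_Suc Un_commute)
  have P_A: "P (s k) (A k)" for k
  proof -
    have "finite (s k)"
    proof (induction k)
      case 0
      show ?case by (simp add: s_0)
    next
      case (Suc k)
      have "P (s k) (A k)" unfolding A_def using P_exists[OF Suc] by (rule someI_ex)
      hence "finite (A k)" using W by (auto simp: P_def exp_set_def)
      with Suc show ?case by (simp add: s_Suc)
    qed
    thus ?thesis unfolding A_def by (rule someI_ex[OF P_exists])
  qed
  have disjoint_less: "A j \<inter> A k = {}" if "j < k" for j k
  proof -
    have "A j \<subseteq> s k" using that by (auto simp: s_eq)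
    moreover have "A k \<inter> s k = {}" using P_A[of k] by (simp add: P_def)
    ultimately show ?thesis by blast
  qed
  show ?thesis
  proof (rule that)
    show "A k \<in> W" for k using P_A[of k] by (simp add: P_def)
    show "A j \<inter> A k = {}" if "j \<noteq> k" for j k
      using that disjoint_less[of j k] disjoint_less[of k j] by (metis Int_commute linorder_neqE_nat)
    show "B = A k" if "B \<in> W" "B \<inter> (\<Union>j<k. A j) = {}" "A k \<subseteq> B" for k B
      using P_A[of k] that by (simp add: P_def s_eq)
  qed
qed

lemma pairwise_disjnt_avoiding_nbhd_empty_locally_finite:
  assumes ts: "topspace X = exp_set n" and sc: "shift_continuous n X" and t1: "t1_space X"
    and U: "openin X U" "{} \<in> U"
    and S: "S \<subseteq> exp_set n" "S \<inter> U = {}" and disj: "pairwise disjnt S"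
    and C: "C \<in> topspace X"
  shows "\<exists>V. openin X V \<and> C \<in> V \<and> finite (V \<inter> S)"
proof (cases "C = {}")
  case True
  thus ?thesis using U S by (intro exI[of _ U]) (auto simp: Int_commute)
next
  case False
  have "finite (upset n C \<inter> S)"
  proof (cases "upset n C \<inter> S = {}")
    case False
    then obtain A where A: "A \<in> S" "C \<subseteq> A" by (auto simp: upset_def)
    have "B = A" if B: "B \<in> upset n C \<inter> S" for B
    proof -
      obtain c where "c \<in> C" using \<open>C \<noteq> {}\<close> by blast
      hence "c \<in> B \<inter> A" using B A by (auto simp: upset_def)
      thus ?thesis using disj B A(1) by (auto simp: pairwise_def disjnt_def)
    qed
    hence "upset n C \<inter> S \<subseteq> {A}" by blast
    thus ?thesis by (rule finite_subset) simp
  qed simp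
  moreover have "openin X (upset n C)" using openin_upset[OF ts sc t1] C ts by simp
  moreover have "C \<in> upset n C" using C ts by (simp add: upset_def)
  ultimately show ?thesis by blast
qed

lemma openin_singleton_maximal_disjoint:
  assumes ts: "topspace X = exp_set n" and sc: "shift_continuous n X" and t1: "t1_space X"
    and n: "n \<ge> 1" and V: "openin X V" and F: "finite F"
    and A: "A \<in> V" "A \<inter> F = {}" and max: "\<And>B. B \<in> V \<Longrightarrow> B \<inter> F = {} \<Longrightarrow> A \<subseteq> B \<Longrightarrow> B = A"
  shows "openin X {A}"
proof -
  have "A \<in> exp_set n" using openin_subset[OF V] A ts by auto
  moreover have "{A} = V \<inter> {B \<in> exp_set n. B \<inter> F = {}} \<inter> upset n A"
    using A max openin_subset[OF V] ts by (auto simp: upset_def)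
  ultimately show ?thesis
    using V openin_upset[OF ts sc t1] openin_disjoint_from_finite[OF ts sc t1 n F]
    by (simp add: openin_Int)
qed

theorem proposition8:
  fixes n :: nat and X :: "'a set topology" and U :: "'a set set"
  assumes "n \<ge> 1"
    and "infinite (UNIV :: 'a set)"
    and "topspace X = exp_set n"
    and "shift_continuous n X"
    and "feebly_compact X"
    and "t1_space X"
    and "openin X U" and "{} \<in> U"
  shows "\<exists>F :: 'a set. finite F \<and>
           exp_set n - X closure_of U \<subseteq> (\<Union>x \<in> F. upset n {x})"
proof (rule ccontr)
  note ts = assms(3) and sc = assms(4) and t1 = assms(6)
  let ?W = "exp_set n - X closure_of U"
  assume "\<not> ?thesis"
  obtain A :: "nat \<Rightarrow> 'a set"
    where A: "\<And>k. A k \<in> ?W" and disj: "\<And>j k. j \<noteq> k \<Longrightarrow> A j \<inter> A k = {}"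
      and max: "\<And>k B. B \<in> ?W \<Longrightarrow> B \<inter> (\<Union>j<k. A j) = {} \<Longrightarrow> A k \<subseteq> B \<Longrightarrow> B = A k"
  proof (rule exp_set_disjoint_maximal_sequence[of ?W n])
    show "\<not> (\<exists>F. finite F \<and> ?W \<subseteq> (\<Union>x \<in> F. upset n {x}))" by fact
  qed (blast, rule that)
  have outside_U: "A k \<notin> U" for k
    using A[of k] closure_of_subset[OF openin_subset[OF assms(7)]] by blast
  have "inj A"
  proof (rule injI)
    fix j k assume "A j = A k"
    thus "j = k" using disj[of j k] outside_U[of k] assms(8) by (metis Int_absorb)
  qed
  have "openin X ?W" using ts by (metis closedin_closure_of openin_diff openin_topspace)
  have isolated: "openin X {A k}" for k
  proof (rule openin_singleton_maximal_disjoint[OF ts sc t1 assms(1) \<open>openin X ?W\<close>])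
    show "finite (\<Union>j<k. A j)" using A by (simp add: exp_set_def)
    show "A k \<inter> (\<Union>j<k. A j) = {}" using disj[of _ k] by (blast dest: less_imp_neq)
  qed (rule A, rule max)
  have "finite (range A)"
  proof (rule feebly_compact_isolated_points_finite[OF assms(5) t1])
    show "range A \<subseteq> topspace X" using A ts by auto
    show "openin X {x}" if "x \<in> range A" for x using that isolated by auto
    have "range A \<subseteq> exp_set n" and "range A \<inter> U = {}" using A outside_U by auto
    moreover have "pairwise disjnt (range A)" by (intro pairwise_imageI) (simp add: disj disjnt_def)
    ultimately show "\<exists>V. openin X V \<and> y \<in> V \<and> finite (V \<inter> range A)" if "y \<in> topspace X" for y
      using pairwise_disjnt_avoiding_nbhd_empty_locally_finite[OF ts sc t1 assms(7,8) _ _ _ that] by blast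
  qed
  with \<open>inj A\<close> show False by (simp add: finite_image_iff)
qed

end
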